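(* Let $\Omega\subset\mathbb{R}^{N}$ ($N>1$) be a bounded smooth domain and, for $p>1$, let $\phi_p$ denote the $p$-torsion function of $\Omega$. Let $\varphi$ be a nonnegative function on $\Omega$ which belongs to $W_0^{1,p}(\Omega)$ for all $p>1$ sufficiently close to $1$, and such that $\int_\Omega|\nabla\varphi|\,dx>0$. Then \[ \liminf_{p\to1^{+}}\|\phi_p\|_{L^1(\Omega)}^{\,p-1}\ \ge\ \frac{\int_\Omega\varphi\,dx}{\int_\Omega|\nabla\varphi|\,dx}. \]
   Context: For $p>1$, the $p$-torsion function $\phi_p$ of $\Omega$ is the (unique) weak solution $\phi_p\in W_0^{1,p}(\Omega)$ of $-\Delta_p\phi_p=1$ in $\Omega$, $\phi_p=0$ on $\partial\Omega$, where $\Delta_p u=\operatorname{div}(|\nabla u|^{p-2}\nabla u)$; i.e. $\int_\Omega|\nabla\phi_p|^{p-2}\nabla\phi_p\cdot\nabla v\,dx=\int_\Omega v\,dx$ for all $v\in W_0^{1,p}(\Omega)$. It is positive in $\Omega$ and belongs to $C^{1,\beta}(\overline\Omega)$. *)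

theory Defs
  imports "HOL-Analysis.Analysis"
begin

definition pd :: "'n::finite \<Rightarrow> (real^'n \<Rightarrow> real) \<Rightarrow> real^'n \<Rightarrow> real" where
  "pd i f x = deriv (\<lambda>t. f (x + t *\<^sub>R axis i 1)) 0"

fun iter_pd :: "'n::finite list \<Rightarrow> (real^'n \<Rightarrow> real) \<Rightarrow> real^'n \<Rightarrow> real" where
  "iter_pd [] f = f"
| "iter_pd (i # is) f = pd i (iter_pd is f)"

definition smooth_fun :: "(real^'n::finite \<Rightarrow> real) \<Rightarrow> bool" where
  "smooth_fun f \<longleftrightarrow>
     (\<forall>is. continuous_on UNIV (iter_pd is f) \<and>
        (\<forall>i x. (\<lambda>t. iter_pd is f (x + t *\<^sub>R axis i 1)) differentiable (at 0)))"

definition grad :: "(real^'n::finite \<Rightarrow> real) \<Rightarrow> real^'n \<Rightarrow> real^'n" where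
  "grad f x = (\<chi> i. pd i f x)"

definition smooth_bounded_domain :: "(real^'n::finite) set \<Rightarrow> bool" where
  "smooth_bounded_domain \<Omega> \<longleftrightarrow> bounded \<Omega> \<and> open \<Omega> \<and> connected \<Omega> \<and> \<Omega> \<noteq> {} \<and>
     (\<exists>\<rho>. smooth_fun \<rho> \<and> \<Omega> = {x. \<rho> x < 0} \<and> (\<forall>x. \<rho> x = 0 \<longrightarrow> grad \<rho> x \<noteq> 0))"

definition test_fun :: "(real^'n::finite) set \<Rightarrow> (real^'n \<Rightarrow> real) \<Rightarrow> bool" where
  "test_fun \<Omega> \<psi> \<longleftrightarrow> smooth_fun \<psi> \<and>
     compact (closure {x. \<psi> x \<noteq> 0}) \<and> closure {x. \<psi> x \<noteq> 0} \<subseteq> \<Omega>"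

definition weak_grad :: "(real^'n::finite) set \<Rightarrow> (real^'n \<Rightarrow> real) \<Rightarrow> (real^'n \<Rightarrow> real^'n) \<Rightarrow> bool" where
  "weak_grad \<Omega> u G \<longleftrightarrow>
     (\<forall>K. compact K \<and> K \<subseteq> \<Omega> \<longrightarrow> set_integrable lebesgue K u \<and> set_integrable lebesgue K G) \<and>
     (\<forall>\<psi> i. test_fun \<Omega> \<psi> \<longrightarrow>
        (LINT x:\<Omega>|lebesgue. u x * pd i \<psi> x) = - (LINT x:\<Omega>|lebesgue. G x $ i * \<psi> x))"

definition W01p :: "(real^'n::finite) set \<Rightarrow> real \<Rightarrow> (real^'n \<Rightarrow> real) \<Rightarrow> (real^'n \<Rightarrow> real^'n) \<Rightarrow> bool" where
  "W01p \<Omega> p u G \<longleftrightarrow>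
     weak_grad \<Omega> u G \<and>
     set_borel_measurable lebesgue \<Omega> u \<and> set_borel_measurable lebesgue \<Omega> G \<and>
     set_integrable lebesgue \<Omega> (\<lambda>x. \<bar>u x\<bar> powr p) \<and>
     set_integrable lebesgue \<Omega> (\<lambda>x. norm (G x) powr p) \<and>
     (\<exists>\<psi>. (\<forall>k. test_fun \<Omega> (\<psi> k)) \<and>
        (\<lambda>k. LINT x:\<Omega>|lebesgue. \<bar>\<psi> k x - u x\<bar> powr p) \<longlonglongrightarrow> 0 \<and>
        (\<lambda>k. LINT x:\<Omega>|lebesgue. norm (grad (\<psi> k) x - G x) powr p) \<longlonglongrightarrow> 0)"

text \<open>phi (with weak gradient G) is the p-torsion function of Omega:
  weak solution in W_0^{1,p} of -Delta_p phi = 1.\<close>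
definition p_torsion :: "(real^'n::finite) set \<Rightarrow> real \<Rightarrow> (real^'n \<Rightarrow> real) \<Rightarrow> (real^'n \<Rightarrow> real^'n) \<Rightarrow> bool" where
  "p_torsion \<Omega> p \<phi> G \<longleftrightarrow> W01p \<Omega> p \<phi> G \<and>
     (\<forall>v Gv. W01p \<Omega> p v Gv \<longrightarrow>
        (LINT x:\<Omega>|lebesgue. norm (G x) powr (p - 2) * (G x \<bullet> Gv x)) = (LINT x:\<Omega>|lebesgue. v x))"

end

theory Submission
  imports Defs
begin

text \<open>Testing the weak equation of \<open>\<phi>\<^sub>p\<close> with \<open>\<psi>\<close> and applying Hoelder's inequality gives
  \<open>\<integral>\<psi> \<le> (\<integral>|\<nabla>\<phi>\<^sub>p|\<^sup>p)\<^bsup>(p-1)/p\<^esup> (\<integral>|\<nabla>\<psi>|\<^sup>p)\<^bsup>1/p\<^esup>\<close>, while testing it with \<open>\<phi>\<^sub>p\<close> itself gives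
  \<open>\<integral>|\<nabla>\<phi>\<^sub>p|\<^sup>p = \<integral>\<phi>\<^sub>p\<close>. Hence \<open>(\<integral>\<psi>)\<^sup>p \<le> \<parallel>\<phi>\<^sub>p\<parallel>\<^sub>1\<^bsup>p-1\<^esup> \<integral>|\<nabla>\<psi>|\<^sup>p\<close> for all \<open>p\<close> close to 1.
  By convexity of \<open>p \<mapsto> t\<^sup>p\<close>, \<open>\<integral>|\<nabla>\<psi>|\<^sup>p\<close> is bounded by the affine interpolation between
  \<open>\<integral>|\<nabla>\<psi>|\<close> and \<open>\<integral>|\<nabla>\<psi>|\<^bsup>p\<^sub>1\<^esup>\<close> for a fixed \<open>p\<^sub>1 > p\<close>, which tends to \<open>\<integral>|\<nabla>\<psi>|\<close> as \<open>p \<rightarrow> 1\<close>.\<close>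

lemma weighted_AM_GM_powr:
  fixes x y \<alpha> \<beta> :: real
  assumes "0 \<le> \<alpha>" "0 \<le> \<beta>" "\<alpha> + \<beta> = 1" "0 \<le> x" "0 \<le> y"
  shows "x powr \<alpha> * y powr \<beta> \<le> \<alpha> * x + \<beta> * y"
proof (cases "x = 0 \<or> y = 0")
  case True
  then show ?thesis using assms by auto
next
  case False
  then show ?thesis using Youngs_inequality_0[of \<alpha> \<beta> x y] assms by auto
qed

lemma powr_le_interpolation:
  fixes t p p1 :: real
  assumes "0 \<le> t" "1 < p" "p < p1"
  shows "t powr p \<le> (1 - (p - 1) / (p1 - 1)) * t + (p - 1) / (p1 - 1) * t powr p1"
proof -
  define l where "l = (p - 1) / (p1 - 1)"
  have l: "0 \<le> l" "l \<le> 1" using assms by (auto simp: l_def field_simps)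
  have "(p1 - 1) * l = p - 1" using assms by (simp add: l_def)
  then have "(1 - l) + p1 * l = p" by (simp add: algebra_simps)
  then have "t powr (1 - l) * (t powr p1) powr l = t powr p"
    by (simp add: powr_powr powr_add[symmetric])
  moreover have "t powr (1 - l) * (t powr p1) powr l \<le> (1 - l) * t + l * t powr p1"
    using weighted_AM_GM_powr[of "1 - l" l t "t powr p1"] l assms by simp
  ultimately show ?thesis by (simp add: l_def)
qed

lemma norm_powr_inner_self:
  fixes v :: "'a::real_inner"
  shows "norm v powr (p - 2) * (v \<bullet> v) = norm v powr p"
proof (cases "v = 0")
  case False
  have "norm v powr (p - 2) * (v \<bullet> v) = norm v powr (p - 2) * norm v powr 2"
    using False by (simp add: power2_norm_eq_inner powr_numeral)
  also have "\<dots> = norm v powr p" by (simp only: powr_add[symmetric]) simp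
  finally show ?thesis .
qed simp

lemma norm_powr_inner_le:
  fixes v w :: "'a::real_inner"
  shows "norm v powr (p - 2) * (v \<bullet> w) \<le> norm v powr (p - 1) * norm w"
proof (cases "v = 0")
  case False
  have "norm v powr (p - 2) * (v \<bullet> w) \<le> norm v powr (p - 2) * (norm v * norm w)"
    by (intro mult_left_mono norm_cauchy_schwarz) simp
  also have "\<dots> = (norm v powr (p - 2) * norm v powr 1) * norm w"
    using False by simp
  also have "\<dots> = norm v powr (p - 1) * norm w"
    by (simp only: powr_add[symmetric]) simp
  finally show ?thesis .
qed simp

lemma integrable_powr_mult_powr:
  fixes a b :: "'a \<Rightarrow> real"
  assumes p: "p > 1"
    and [measurable]: "a \<in> borel_measurable M" "b \<in> borel_measurable M"
    and nonneg: "\<And>x. x \<in> space M \<Longrightarrow> 0 \<le> a x" "\<And>x. x \<in> space M \<Longrightarrow> 0 \<le> b x"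
    and "integrable M (\<lambda>x. a x powr p)" "integrable M (\<lambda>x. b x powr p)"
  shows "integrable M (\<lambda>x. a x powr (p - 1) * b x)"
proof (rule Bochner_Integration.integrable_bound)
  show "integrable M (\<lambda>x. (p - 1) / p * a x powr p + 1 / p * b x powr p)"
    using assms by auto
  show "AE x in M. norm (a x powr (p - 1) * b x)
                   \<le> norm ((p - 1) / p * a x powr p + 1 / p * b x powr p)"
  proof (rule AE_I2)
    fix x assume x: "x \<in> space M"
    have "(a x powr p) powr ((p - 1) / p) * (b x powr p) powr (1 / p) = a x powr (p - 1) * b x"
      using p nonneg[OF x] by (simp add: powr_powr)
    then have "a x powr (p - 1) * b x \<le> (p - 1) / p * a x powr p + 1 / p * b x powr p"
      using weighted_AM_GM_powr[of "(p - 1) / p" "1 / p" "a x powr p" "b x powr p"] p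
      by (simp add: diff_divide_distrib)
    then show "norm (a x powr (p - 1) * b x) \<le> norm ((p - 1) / p * a x powr p + 1 / p * b x powr p)"
      using nonneg[OF x] by simp
  qed
qed measurable

lemma Holder_inequality_powr:
  fixes a b :: "'a \<Rightarrow> real"
  assumes p: "p > 1"
    and [measurable]: "a \<in> borel_measurable M" "b \<in> borel_measurable M"
    and nonneg: "\<And>x. x \<in> space M \<Longrightarrow> 0 \<le> a x" "\<And>x. x \<in> space M \<Longrightarrow> 0 \<le> b x"
    and ia: "integrable M (\<lambda>x. a x powr p)" and ib: "integrable M (\<lambda>x. b x powr p)"
  shows "(\<integral>x. a x powr (p - 1) * b x \<partial>M)
           \<le> (\<integral>x. a x powr p \<partial>M) powr ((p - 1) / p) * (\<integral>x. b x powr p \<partial>M) powr (1 / p)"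
proof -
  define \<alpha> where "\<alpha> = (p - 1) / p"
  define \<beta> where "\<beta> = 1 / p"
  define A where "A = (\<integral>x. a x powr p \<partial>M)"
  define B where "B = (\<integral>x. b x powr p \<partial>M)"
  have \<alpha>\<beta>: "0 \<le> \<alpha>" "0 \<le> \<beta>" "\<alpha> + \<beta> = 1" using p by (auto simp: \<alpha>_def \<beta>_def field_simps)
  have int: "integrable M (\<lambda>x. a x powr (p - 1) * b x)"
    using integrable_powr_mult_powr[OF assms] .
  show ?thesis
  proof (cases "A = 0 \<or> B = 0")
    case True
    then have "AE x in M. a x powr p = 0 \<or> b x powr p = 0"
      using integral_nonneg_eq_0_iff_AE[OF ia] integral_nonneg_eq_0_iff_AE[OF ib] nonneg
      by (auto simp: A_def B_def elim: eventually_mono)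
    then have "AE x in M. a x powr (p - 1) * b x = 0"
      by eventually_elim (use p in auto)
    then show ?thesis by (simp add: integral_eq_zero_AE)
  next
    case False
    then have AB: "A > 0" "B > 0" by (auto simp: A_def B_def order_less_le)
    \<comment> \<open>Young's inequality applied to the normalized functions \<open>a\<^sup>p/A\<close> and \<open>b\<^sup>p/B\<close>.\<close>
    have pointwise: "a x powr (p - 1) * b x / (A powr \<alpha> * B powr \<beta>)
                       \<le> \<alpha> * (a x powr p / A) + \<beta> * (b x powr p / B)" if "x \<in> space M" for x
    proof -
      have "(a x powr p / A) powr \<alpha> * (b x powr p / B) powr \<beta>
              = a x powr (p - 1) * b x / (A powr \<alpha> * B powr \<beta>)"
        using p nonneg[OF that] AB by (simp add: powr_divide powr_powr \<alpha>_def \<beta>_def)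
      then show ?thesis
        using weighted_AM_GM_powr[OF \<alpha>\<beta>, of "a x powr p / A" "b x powr p / B"] AB by simp
    qed
    have "(\<integral>x. a x powr (p - 1) * b x / (A powr \<alpha> * B powr \<beta>) \<partial>M)
            \<le> (\<integral>x. \<alpha> * (a x powr p / A) + \<beta> * (b x powr p / B) \<partial>M)"
      by (rule integral_mono) (use int ia ib pointwise in auto)
    also have "\<dots> = \<alpha> * (A / A) + \<beta> * (B / B)"
      using ia ib by (simp add: A_def B_def)
    also have "\<dots> = 1" using AB \<alpha>\<beta> by simp
    finally show ?thesis using AB by (simp add: A_def B_def \<alpha>_def \<beta>_def)
  qed
qed

lemma weak_p_Laplacian_test_estimate:
  fixes Gu Gv :: "'a \<Rightarrow> 'b::euclidean_space" and u :: "'a \<Rightarrow> real"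
  assumes p: "p > 1"
    and [measurable]: "Gu \<in> borel_measurable M" "Gv \<in> borel_measurable M"
    and iu: "integrable M (\<lambda>x. norm (Gu x) powr p)" and iv: "integrable M (\<lambda>x. norm (Gv x) powr p)"
    and test_u: "(\<integral>x. norm (Gu x) powr (p - 2) * (Gu x \<bullet> Gu x) \<partial>M) = (\<integral>x. u x \<partial>M)"
    and test_v: "(\<integral>x. norm (Gu x) powr (p - 2) * (Gu x \<bullet> Gv x) \<partial>M) = I"
    and "I \<ge> 0"
  shows "I powr p \<le> (\<integral>x. \<bar>u x\<bar> \<partial>M) powr (p - 1) * (\<integral>x. norm (Gv x) powr p \<partial>M)"
proof -
  define A where "A = (\<integral>x. norm (Gu x) powr p \<partial>M)"
  define B where "B = (\<integral>x. norm (Gv x) powr p \<partial>M)"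
  define S where "S = (\<integral>x. \<bar>u x\<bar> \<partial>M)"
  have "A = (\<integral>x. u x \<partial>M)" using test_u by (simp add: A_def norm_powr_inner_self)
  also have "\<dots> \<le> S"
    unfolding S_def
    by (cases "integrable M u") (auto intro: integral_mono simp: not_integrable_integral_eq)
  finally have "A \<le> S" .
  have "I \<le> (\<integral>x. norm (Gu x) powr (p - 1) * norm (Gv x) \<partial>M)"
    unfolding test_v[symmetric]
    by (intro integral_mono' integrable_powr_mult_powr[OF p] norm_powr_inner_le) (use iu iv in auto)
  also have "\<dots> \<le> A powr ((p - 1) / p) * B powr (1 / p)"
    using Holder_inequality_powr[OF p, of "\<lambda>x. norm (Gu x)" M "\<lambda>x. norm (Gv x)"] iu iv
    by (simp add: A_def B_def)
  finally have "I powr p \<le> (A powr ((p - 1) / p) * B powr (1 / p)) powr p"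
    using \<open>I \<ge> 0\<close> p by (intro powr_mono2) auto
  also have "\<dots> = A powr (p - 1) * B"
    using p by (simp add: A_def B_def powr_mult powr_powr)
  also have "\<dots> \<le> S powr (p - 1) * B"
    using \<open>A \<le> S\<close> p by (intro mult_right_mono powr_mono2) (auto simp: A_def B_def)
  finally show ?thesis by (simp add: S_def B_def)
qed

lemma p_torsion_test_estimate:
  fixes \<Omega> :: "(real^'n) set"
  assumes "open \<Omega>" "p > 1" and torsion: "p_torsion \<Omega> p \<phi> G\<phi>" and W: "W01p \<Omega> p \<psi> G"
    and "\<forall>x\<in>\<Omega>. \<psi> x \<ge> 0"
  shows "(LINT x:\<Omega>|lebesgue. \<psi> x) powr p
           \<le> (LINT x:\<Omega>|lebesgue. \<bar>\<phi> x\<bar>) powr (p - 1) * (LINT x:\<Omega>|lebesgue. norm (G x) powr p)"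
proof -
  define M where "M = restrict_space lebesgue \<Omega>"
  have \<Omega>: "\<Omega> \<inter> space lebesgue \<in> sets lebesgue"
    using \<open>open \<Omega>\<close> by (simp add: borel_open sets_completionI_sets)
  have LINT: "(LINT x:\<Omega>|lebesgue. f x) = (\<integral>x. f x \<partial>M)" for f :: "real^'n \<Rightarrow> real"
    by (simp add: M_def set_lebesgue_integral_def integral_restrict_space[OF \<Omega>])
  have integrable: "set_integrable lebesgue \<Omega> f = integrable M f" for f :: "real^'n \<Rightarrow> real"
    by (simp add: M_def set_integrable_eq[OF \<Omega>])
  have measurable: "set_borel_measurable lebesgue \<Omega> F = (F \<in> borel_measurable M)"
    for F :: "real^'n \<Rightarrow> real^'n"
    by (simp add: M_def set_borel_measurable_def borel_measurable_restrict_space_iff[OF \<Omega>])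
  have W\<phi>: "W01p \<Omega> p \<phi> G\<phi>" using torsion unfolding p_torsion_def by auto
  have "0 \<le> (\<integral>x. \<psi> x \<partial>M)"
    using assms(5) by (intro Bochner_Integration.integral_nonneg) (simp add: M_def space_restrict_space)
  moreover have "(\<integral>x. norm (G\<phi> x) powr (p - 2) * (G\<phi> x \<bullet> G\<phi> x) \<partial>M) = (\<integral>x. \<phi> x \<partial>M)"
    and "(\<integral>x. norm (G\<phi> x) powr (p - 2) * (G\<phi> x \<bullet> G x) \<partial>M) = (\<integral>x. \<psi> x \<partial>M)"
    using torsion W\<phi> W unfolding p_torsion_def by (auto simp: LINT)
  ultimately show ?thesis
    using weak_p_Laplacian_test_estimate[OF \<open>p > 1\<close>, of G\<phi> M G] W\<phi> W
    unfolding W01p_def by (simp add: LINT integrable measurable)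
qed

lemma set_integral_powr_le_interpolation:
  fixes f :: "'a \<Rightarrow> real"
  assumes "1 < p" "p < p1" "\<And>x. x \<in> A \<Longrightarrow> 0 \<le> f x"
    and "set_integrable M A f" "set_integrable M A (\<lambda>x. f x powr p)"
    and "set_integrable M A (\<lambda>x. f x powr p1)"
  shows "(LINT x:A|M. f x powr p)
           \<le> (1 - (p - 1) / (p1 - 1)) * (LINT x:A|M. f x)
             + (p - 1) / (p1 - 1) * (LINT x:A|M. f x powr p1)"
proof -
  have "(LINT x:A|M. f x powr p)
          \<le> (LINT x:A|M. (1 - (p - 1) / (p1 - 1)) * f x + (p - 1) / (p1 - 1) * f x powr p1)"
    using assms by (intro set_integral_mono powr_le_interpolation) auto
  also have "\<dots> = (1 - (p - 1) / (p1 - 1)) * (LINT x:A|M. f x)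
                  + (p - 1) / (p1 - 1) * (LINT x:A|M. f x powr p1)"
    using assms by (simp add: set_integral_add set_integral_mult_right)
  finally show ?thesis .
qed

lemma p_torsion_interpolated_estimate:
  fixes \<Omega> :: "(real^'n) set"
  assumes "open \<Omega>" "1 < p" "p < p1"
    and "p_torsion \<Omega> p \<phi> G\<phi>" "W01p \<Omega> p \<psi> G" and W1: "W01p \<Omega> p1 \<psi> G"
    and "\<forall>x\<in>\<Omega>. \<psi> x \<ge> 0" and pos: "(LINT x:\<Omega>|lebesgue. norm (G x)) > 0"
  shows "(LINT x:\<Omega>|lebesgue. \<psi> x) powr p
           / ((1 - (p - 1) / (p1 - 1)) * (LINT x:\<Omega>|lebesgue. norm (G x))
              + (p - 1) / (p1 - 1) * (LINT x:\<Omega>|lebesgue. norm (G x) powr p1))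
         \<le> (LINT x:\<Omega>|lebesgue. \<bar>\<phi> x\<bar>) powr (p - 1)"
proof -
  define D where "D = (1 - (p - 1) / (p1 - 1)) * (LINT x:\<Omega>|lebesgue. norm (G x))
                        + (p - 1) / (p1 - 1) * (LINT x:\<Omega>|lebesgue. norm (G x) powr p1)"
  have "set_integrable lebesgue \<Omega> (\<lambda>x. norm (G x))"
    using pos unfolding set_integrable_def set_lebesgue_integral_def
    by (metis not_integrable_integral_eq less_irrefl)
  have "(LINT x:\<Omega>|lebesgue. \<psi> x) powr p
          \<le> (LINT x:\<Omega>|lebesgue. \<bar>\<phi> x\<bar>) powr (p - 1) * (LINT x:\<Omega>|lebesgue. norm (G x) powr p)"
    using p_torsion_test_estimate assms by blast
  also have "\<dots> \<le> (LINT x:\<Omega>|lebesgue. \<bar>\<phi> x\<bar>) powr (p - 1) * D"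
    using assms \<open>set_integrable lebesgue \<Omega> (\<lambda>x. norm (G x))\<close> unfolding D_def W01p_def
    by (intro mult_left_mono set_integral_powr_le_interpolation) auto
  finally have "(LINT x:\<Omega>|lebesgue. \<psi> x) powr p \<le> (LINT x:\<Omega>|lebesgue. \<bar>\<phi> x\<bar>) powr (p - 1) * D" .
  moreover have "0 \<le> (LINT x:\<Omega>|lebesgue. norm (G x) powr p1)"
    unfolding set_lebesgue_integral_def by (intro Bochner_Integration.integral_nonneg) simp
  then have "D > 0"
    unfolding D_def using assms
    by (intro add_pos_nonneg mult_pos_pos mult_nonneg_nonneg divide_nonneg_nonneg)
      (auto simp: field_simps)
  ultimately show ?thesis by (simp add: D_def divide_le_eq)
qed

lemma Liminf_at_right_ge_of_tendsto_eventually_le: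
  fixes f g :: "real \<Rightarrow> real"
  assumes "(g \<longlongrightarrow> L) (at_right a)" "eventually (\<lambda>p. g p \<le> f p) (at_right a)"
  shows "ereal L \<le> Liminf (at_right a) (\<lambda>p. ereal (f p))"
proof -
  have "Liminf (at_right a) (\<lambda>p. ereal (g p)) = ereal L"
    using assms(1) by (intro lim_imp_Liminf tendsto_ereal) auto
  moreover have "Liminf (at_right a) (\<lambda>p. ereal (g p)) \<le> Liminf (at_right a) (\<lambda>p. ereal (f p))"
    using assms(2) by (intro Liminf_mono) (simp add: eventually_mono)
  ultimately show ?thesis by simp
qed

theorem lemma1:
  fixes \<Omega> :: "(real^'n) set"
    and \<phi> :: "real \<Rightarrow> real^'n \<Rightarrow> real" and G\<phi> :: "real \<Rightarrow> real^'n \<Rightarrow> real^'n"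
    and \<psi> :: "real^'n \<Rightarrow> real" and G :: "real^'n \<Rightarrow> real^'n"
  assumes "CARD('n) \<ge> 2"
    and "smooth_bounded_domain \<Omega>"
    and "\<forall>p>1. p_torsion \<Omega> p (\<phi> p) (G\<phi> p)"
    and "\<forall>x\<in>\<Omega>. \<psi> x \<ge> 0"
    and "\<exists>p0>1. \<forall>p. 1 < p \<and> p < p0 \<longrightarrow> W01p \<Omega> p \<psi> G"
    and "(LINT x:\<Omega>|lebesgue. norm (G x)) > 0"
  shows "ereal ((LINT x:\<Omega>|lebesgue. \<psi> x) / (LINT x:\<Omega>|lebesgue. norm (G x)))
           \<le> Liminf (at_right 1) (\<lambda>p. ereal ((LINT x:\<Omega>|lebesgue. \<bar>\<phi> p x\<bar>) powr (p - 1)))"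
proof -
  have "open \<Omega>" using assms(2) unfolding smooth_bounded_domain_def by auto
  obtain p0 where "p0 > 1" and W: "\<And>p. 1 < p \<Longrightarrow> p < p0 \<Longrightarrow> W01p \<Omega> p \<psi> G"
    using assms(5) by auto
  define p1 where "p1 = (1 + p0) / 2"
  have p1: "1 < p1" "p1 < p0" using \<open>p0 > 1\<close> by (auto simp: p1_def)
  define I where "I = (LINT x:\<Omega>|lebesgue. \<psi> x)"
  define g1 where "g1 = (LINT x:\<Omega>|lebesgue. norm (G x))"
  define D where "D = (\<lambda>p. (1 - (p - 1) / (p1 - 1)) * g1
                           + (p - 1) / (p1 - 1) * (LINT x:\<Omega>|lebesgue. norm (G x) powr p1))"
  have "eventually (\<lambda>p. I powr p / D p \<le> (LINT x:\<Omega>|lebesgue. \<bar>\<phi> p x\<bar>) powr (p - 1)) (at_right 1)"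
    unfolding I_def D_def g1_def using \<open>open \<Omega>\<close> assms(3,4,6) W p1
    by (intro eventually_at_rightI[OF _ \<open>1 < p1\<close>] p_torsion_interpolated_estimate) auto
  moreover have "I \<ge> 0"
    using assms(4) unfolding I_def set_lebesgue_integral_def
    by (intro Bochner_Integration.integral_nonneg) (simp add: indicator_def)
  then have "((\<lambda>p. I powr p / D p) \<longlongrightarrow> I powr 1 / g1) (at_right 1)"
    unfolding D_def using assms(6) p1
    by (intro tendsto_intros tendsto_powr' tendsto_eq_intros) (auto simp: g1_def)
  ultimately show ?thesis
    using \<open>I \<ge> 0\<close> Liminf_at_right_ge_of_tendsto_eventually_le by (simp add: I_def g1_def)
qed

end
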